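(* Let $X$ be a complete separable metric space without isolated points and $f:X\to X$ a non-singular map. Then $f$ is not topologically ergodic; that is, there is a set $V\subset X$ with $f^{-1}(V)=V$ which is neither meager nor residual.
   Context: A set is meager if it is a countable union of nowhere dense sets, residual if its complement is meager. $f$ is non-singular if $f^{-1}(M)$ is meager for every meager $M$. $f$ is topologically ergodic if every set $V$ with $f^{-1}(V)=V$ (no measurability assumed) is meager or residual. *)

theory Defs
  imports "HOL-Analysis.Analysis"
begin

definition nowhere_dense :: "'a::topological_space set \<Rightarrow> bool" where
  "nowhere_dense S \<longleftrightarrow> interior (closure S) = {}"

definition meager :: "'a::topological_space set \<Rightarrow> bool" where
  "meager S \<longleftrightarrow> (\<exists>F. countable F \<and> (\<forall>N\<in>F. nowhere_dense N) \<and> S = \<Union>F)"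

definition residual :: "'a::topological_space set \<Rightarrow> bool" where
  "residual S \<longleftrightarrow> meager (- S)"

definition non_singular :: "('a::topological_space \<Rightarrow> 'a) \<Rightarrow> bool" where
  "non_singular f \<longleftrightarrow> (\<forall>M. meager M \<longrightarrow> meager (f -` M))"

definition topologically_ergodic :: "('a::topological_space \<Rightarrow> 'a) \<Rightarrow> bool" where
  "topologically_ergodic f \<longleftrightarrow> (\<forall>V. f -` V = V \<longrightarrow> meager V \<or> residual V)"

end

theory Submission
  imports Defs
begin

text \<open>Suppose \<open>f\<close> were topologically ergodic and pick a representative of every grand orbit,
  the classes of \<open>x \<sim> y \<longleftrightarrow> f\<^sup>n x = f\<^sup>m y\<close>. Preimages under this choice map are
  \<open>f\<close>-invariant, hence meager or residual, which forces the map to be constant on a residual set.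
  That set lies in a single grand orbit, the countable union of the sets \<open>f\<^sup>-\<^sup>n {f\<^sup>m c}\<close>, each
  meager by non-singularity since points are nowhere dense in a perfect space. A meager residual
  set contradicts the Baire category theorem.\<close>

lemma nowhere_dense_subset: "nowhere_dense N \<Longrightarrow> T \<subseteq> N \<Longrightarrow> nowhere_dense T"
  unfolding nowhere_dense_def by (metis closure_mono interior_mono subset_empty)

lemma meager_subset:
  assumes "meager S" "T \<subseteq> S"
  shows "meager T"
proof -
  obtain F where F: "countable F" "\<forall>N\<in>F. nowhere_dense N" "S = \<Union>F"
    using assms(1) unfolding meager_def by blast
  have "T = \<Union>((\<lambda>N. N \<inter> T) ` F)"
    using F(3) assms(2) by blast
  moreover have "\<forall>N\<in>(\<lambda>N. N \<inter> T) ` F. nowhere_dense N"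
    using F(2) nowhere_dense_subset by blast
  ultimately show ?thesis
    using F(1) unfolding meager_def by blast
qed

lemma meager_Union:
  assumes "countable A" "\<And>S. S \<in> A \<Longrightarrow> meager S"
  shows "meager (\<Union>A)"
proof -
  have "\<forall>S\<in>A. \<exists>F. countable F \<and> (\<forall>N\<in>F. nowhere_dense N) \<and> \<Union>F = S"
    using assms(2) unfolding meager_def by metis
  then obtain G where G: "\<And>S. S \<in> A \<Longrightarrow> countable (G S) \<and> (\<forall>N\<in>G S. nowhere_dense N) \<and> \<Union>(G S) = S"
    by metis
  have "\<Union>(\<Union>S\<in>A. G S) = (\<Union>S\<in>A. \<Union>(G S))"
    by blast
  also have "\<dots> = \<Union>A"
    using G by simp
  finally have "\<Union>A = \<Union>(\<Union>S\<in>A. G S)" ..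
  moreover have "countable (\<Union>S\<in>A. G S)"
    using G assms(1) by blast
  moreover have "\<forall>N\<in>(\<Union>S\<in>A. G S). nowhere_dense N"
    using G by blast
  ultimately show ?thesis
    unfolding meager_def by blast
qed

lemma meager_UN:
  "countable I \<Longrightarrow> (\<And>i. i \<in> I \<Longrightarrow> meager (A i)) \<Longrightarrow> meager (\<Union>i\<in>I. A i)"
  using meager_Union[of "A ` I"] by auto

lemma residual_INT:
  "countable I \<Longrightarrow> (\<And>i. i \<in> I \<Longrightarrow> residual (A i)) \<Longrightarrow> residual (\<Inter>i\<in>I. A i)"
  unfolding residual_def using meager_UN[of I "\<lambda>i. - A i"] by (simp add: uminus_INF)

lemma residual_subset: "residual S \<Longrightarrow> S \<subseteq> T \<Longrightarrow> residual T"
  unfolding residual_def by (erule meager_subset) blast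

lemma meager_singleton: "meager {x::'a::{perfect_space,t1_space}}"
  unfolding meager_def nowhere_dense_def by (rule exI[of _ "{{x}}"]) auto

lemma not_meager_UNIV: "\<not> meager (UNIV :: 'a::polish_space set)"
proof
  assume "meager (UNIV :: 'a set)"
  then obtain F :: "'a set set" where F: "countable F" "\<forall>N\<in>F. nowhere_dense N" "UNIV = \<Union>F"
    unfolding meager_def by blast
  have "euclidean interior_of \<Union>(closure ` F) = {}"
    using completely_metrizable_space_euclidean F(1,2)
    by (intro Baire_category_alt) (auto simp: nowhere_dense_def)
  moreover have "\<Union>(closure ` F) = UNIV"
    using F(3) closure_subset by blast
  ultimately show False
    by simp
qed

lemma meager_Un: "meager A \<Longrightarrow> meager B \<Longrightarrow> meager (A \<union> B)"
  using meager_Union[of "{A, B}"] by auto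

lemma meager_funpow_vimage:
  assumes "non_singular f" "meager M"
  shows "meager ((f ^^ n) -` M)"
proof (induction n)
  case 0
  then show ?case using assms(2) by simp
next
  case (Suc n)
  then have "meager (f -` ((f ^^ n) -` M))"
    using assms(1) unfolding non_singular_def by blast
  then show ?case
    unfolding funpow_Suc_right vimage_comp .
qed

text \<open>Intersect, over a countable basis, the residual member of each pair \<open>r -` U\<close>,
  \<open>- r -` U\<close>: two points of the intersection cannot be separated by a basic set.\<close>

lemma residual_fibre_if_preimages_meager_or_residual:
  fixes r :: "'a::topological_space \<Rightarrow> 'b::{second_countable_topology, t1_space}"
  assumes "\<And>U. open U \<Longrightarrow> meager (r -` U) \<or> residual (r -` U)"
  shows "\<exists>c. residual (r -` {c})"
proof -
  obtain \<B> :: "'b set set" where \<B>: "countable \<B>" "topological_basis \<B>"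
    using ex_countable_basis by blast
  define S where "S = (\<Inter>U\<in>\<B>. {x. r x \<in> U \<longleftrightarrow> residual (r -` U)})"
  have "residual {x. r x \<in> U \<longleftrightarrow> residual (r -` U)}" if "U \<in> \<B>" for U
  proof (cases "residual (r -` U)")
    case True
    then show ?thesis
      by (simp add: vimage_def)
  next
    case False
    then have "meager (r -` U)"
      using assms topological_basis_open[OF \<B>(2) that] by blast
    moreover have "{x. r x \<in> U \<longleftrightarrow> residual (r -` U)} = - (r -` U)"
      using False by auto
    ultimately show ?thesis
      by (simp add: residual_def)
  qed
  then have "residual S"
    unfolding S_def using \<B>(1) by (rule residual_INT[rotated])
  show ?thesis
  proof (cases "S = {}")
    case True
    then show ?thesis
      using \<open>residual S\<close> residual_subset by blast
  next
    case False
    then obtain x0 where "x0 \<in> S" by blast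
    have "r y = r x0" if "y \<in> S" for y
    proof (rule ccontr)
      assume "r y \<noteq> r x0"
      then obtain U where "U \<in> \<B>" "r y \<in> U" "U \<subseteq> - {r x0}"
        using topological_basisE[OF \<B>(2), of "- {r x0}" "r y"] by blast
      then show False
        using that \<open>x0 \<in> S\<close> unfolding S_def by blast
    qed
    then have "S \<subseteq> r -` {r x0}" by blast
    then show ?thesis
      using \<open>residual S\<close> residual_subset by blast
  qed
qed

definition same_grand_orbit :: "('a \<Rightarrow> 'a) \<Rightarrow> 'a \<Rightarrow> 'a \<Rightarrow> bool" where
  "same_grand_orbit f x y \<longleftrightarrow> (\<exists>n m. (f ^^ n) x = (f ^^ m) y)"

lemma same_grand_orbit_refl: "same_grand_orbit f x x"
  unfolding same_grand_orbit_def by blast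

lemma same_grand_orbit_sym: "same_grand_orbit f x y \<Longrightarrow> same_grand_orbit f y x"
  unfolding same_grand_orbit_def by metis

lemma same_grand_orbit_trans:
  assumes "same_grand_orbit f x y" "same_grand_orbit f y z"
  shows "same_grand_orbit f x z"
proof -
  obtain n m k l where xy: "(f ^^ n) x = (f ^^ m) y" and yz: "(f ^^ k) y = (f ^^ l) z"
    using assms unfolding same_grand_orbit_def by blast
  have "(f ^^ (k + n)) x = (f ^^ (m + k)) y"
    by (simp add: funpow_add xy add.commute[of m])
  also have "\<dots> = (f ^^ (m + l)) z"
    by (simp add: funpow_add yz)
  finally show ?thesis
    unfolding same_grand_orbit_def by blast
qed

lemma same_grand_orbit_apply: "same_grand_orbit f (f x) x"
  unfolding same_grand_orbit_def by (metis funpow_simps_right(2) o_apply)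

lemma meager_grand_orbit:
  fixes f :: "'a::{perfect_space, t1_space} \<Rightarrow> 'a"
  assumes "non_singular f"
  shows "meager {x. same_grand_orbit f x c}"
proof -
  have "{x. same_grand_orbit f x c} = (\<Union>n. \<Union>m. (f ^^ n) -` {(f ^^ m) c})"
    unfolding same_grand_orbit_def by blast
  also have "meager \<dots>"
    by (intro meager_UN countableI_type meager_funpow_vimage[OF assms] meager_singleton)
  finally show ?thesis .
qed

definition grand_orbit_rep :: "('a \<Rightarrow> 'a) \<Rightarrow> 'a \<Rightarrow> 'a" where
  "grand_orbit_rep f x = (SOME y. same_grand_orbit f x y)"

lemma same_grand_orbit_rep: "same_grand_orbit f x (grand_orbit_rep f x)"
  unfolding grand_orbit_rep_def by (rule someI, rule same_grand_orbit_refl)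

lemma grand_orbit_rep_eq:
  assumes "same_grand_orbit f x y"
  shows "grand_orbit_rep f x = grand_orbit_rep f y"
proof -
  have same: "same_grand_orbit f x z \<longleftrightarrow> same_grand_orbit f y z" for z
    using same_grand_orbit_trans[OF assms] same_grand_orbit_trans[OF same_grand_orbit_sym[OF assms]]
    by blast
  show ?thesis
    unfolding grand_orbit_rep_def same ..
qed

lemma grand_orbit_rep_apply: "grand_orbit_rep f (f x) = grand_orbit_rep f x"
  by (rule grand_orbit_rep_eq, rule same_grand_orbit_apply)

theorem proposition3p2:
  fixes f :: "'a::{polish_space, perfect_space} \<Rightarrow> 'a"
  assumes "non_singular f"
  shows "\<not> topologically_ergodic f"
proof
  assume "topologically_ergodic f"
  let ?r = "grand_orbit_rep f"
  have "f -` (?r -` U) = ?r -` U" for U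
    by (auto simp: grand_orbit_rep_apply)
  with \<open>topologically_ergodic f\<close> have "meager (?r -` U) \<or> residual (?r -` U)" for U
    unfolding topologically_ergodic_def by simp
  then obtain c where residual: "residual (?r -` {c})"
    using residual_fibre_if_preimages_meager_or_residual by blast
  have "?r -` {c} \<subseteq> {x. same_grand_orbit f x c}"
    using same_grand_orbit_rep by fastforce
  then have "meager (?r -` {c})"
    using meager_grand_orbit[OF assms] by (rule meager_subset[rotated])
  then have "meager (?r -` {c} \<union> - ?r -` {c})"
    using residual unfolding residual_def by (rule meager_Un)
  then show False
    using not_meager_UNIV[where 'a = 'a] by simp
qed

end
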